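(* Let $i,j\in J$ be two jobs with $\varphi_i(0)>\varphi_j(0)$, $w_ip_j\neq w_jp_i$ and $t^*_{ij}\in(0,T)$. If in a complete schedule $S$ job $i$ starts at a time $t_i\in[t^*_{ij},t^*_{ij}+p_j)$, then $S$ is not a potential schedule.
   Context: $J$ is a finite set of jobs; job $j$ has processing time $p_j>0$ and weight $w_j>0$; $T=\sum_{j\in J}p_j$. A complete schedule is an ordering of $J$ processed consecutively without idle time from time $0$; job $j$ has start time $t_j$. For $t\ge 0$, $\varphi_j(t)=\frac{w_j}{p_j(p_j+t)}$. For jobs $i,j$ with $w_ip_j\neq w_jp_i$, $t^*_{ij}=\frac{w_jp_i^2-w_ip_j^2}{w_ip_j-w_jp_i}$ (the unique real $t$ with $\varphi_i(t)=\varphi_j(t)$). Dominance rule: for an interval $I\subseteq[0,\infty)$, the relation "$i$ dominates $j$ on $I$" is violated by a schedule if $j$ is processed before $i$ and both $t_j\in I$ and $t_i-p_j\in I$. The rule contains, for each pair of distinct jobs $i,j$ with $(p_i,w_i)\ne(p_j,w_j)$: (1) if $\varphi_i(t)\ge\varphi_j(t)$ for all $t\ge 0$, "$i$ dominates $j$ on $[0,\infty)$"; (2) otherwise, if $\varphi_j(t)\ge\varphi_i(t)$ for all $t\ge0$, "$j$ dominates $i$ on $[0,\infty)$"; (3) otherwise, labelling the pair so that $\varphi_i(0)>\varphi_j(0)$, $t^*_{ij}>0$ is defined and the rule contains "$i$ dominates $j$ on $[0,t^*_{ij})$" and "$j$ dominates $i$ on $[t^*_{ij},\infty)$". A complete schedule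 is a potential schedule if it violates no relation of the rule. *)

theory Defs
  imports Complex_Main
begin

definition phi :: "('a \<Rightarrow> real) \<Rightarrow> ('a \<Rightarrow> real) \<Rightarrow> 'a \<Rightarrow> real \<Rightarrow> real" where
  "phi p w j t = w j / (p j * (p j + t))"

definition tstar :: "('a \<Rightarrow> real) \<Rightarrow> ('a \<Rightarrow> real) \<Rightarrow> 'a \<Rightarrow> 'a \<Rightarrow> real" where
  "tstar p w i j = (w j * (p i)^2 - w i * (p j)^2) / (w i * p j - w j * p i)"

text \<open>A complete schedule is an ordering of J, represented as a list of the jobs in processing order.\<close>
definition complete_schedule :: "'a set \<Rightarrow> 'a list \<Rightarrow> bool" where
  "complete_schedule J \<sigma> \<longleftrightarrow> distinct \<sigma> \<and> set \<sigma> = J"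

text \<open>Start time: total processing time of the jobs preceding j (no idle time, starting at 0).\<close>
definition start :: "('a \<Rightarrow> real) \<Rightarrow> 'a list \<Rightarrow> 'a \<Rightarrow> real" where
  "start p \<sigma> j = sum_list (map p (takeWhile (\<lambda>x. x \<noteq> j) \<sigma>))"

definition before :: "'a list \<Rightarrow> 'a \<Rightarrow> 'a \<Rightarrow> bool" where
  "before \<sigma> a b \<longleftrightarrow> (\<exists>k l. k < l \<and> l < length \<sigma> \<and> \<sigma> ! k = a \<and> \<sigma> ! l = b)"

text \<open>A relation (i, j, I) means "i dominates j on I".  It is violated by schedule \<sigma>
  if j is processed before i and both t_j and t_i - p_j lie in I.\<close>
definition violates :: "('a \<Rightarrow> real) \<Rightarrow> 'a list \<Rightarrow> 'a \<times> 'a \<times> real set \<Rightarrow> bool" where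
  "violates p \<sigma> r = (case r of (i, j, I) \<Rightarrow>
      before \<sigma> j i \<and> start p \<sigma> j \<in> I \<and> start p \<sigma> i - p j \<in> I)"

definition dominance_rule :: "'a set \<Rightarrow> ('a \<Rightarrow> real) \<Rightarrow> ('a \<Rightarrow> real) \<Rightarrow> ('a \<times> 'a \<times> real set) set" where
  "dominance_rule J p w =
    {(i, j, I) | i j I. i \<in> J \<and> j \<in> J \<and> i \<noteq> j \<and> (p i, w i) \<noteq> (p j, w j) \<and>
       ( ((\<forall>t\<ge>0. phi p w i t \<ge> phi p w j t) \<and> I = {0..})
       \<or> (\<not> (\<forall>t\<ge>0. phi p w i t \<ge> phi p w j t) \<and> \<not> (\<forall>t\<ge>0. phi p w j t \<ge> phi p w i t) \<and>
          phi p w i 0 > phi p w j 0 \<and> I = {0..<tstar p w i j})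
       \<or> (\<not> (\<forall>t\<ge>0. phi p w i t \<ge> phi p w j t) \<and> \<not> (\<forall>t\<ge>0. phi p w j t \<ge> phi p w i t) \<and>
          phi p w j 0 > phi p w i 0 \<and> I = {tstar p w j i..}))}"

definition potential_schedule :: "'a set \<Rightarrow> ('a \<Rightarrow> real) \<Rightarrow> ('a \<Rightarrow> real) \<Rightarrow> 'a list \<Rightarrow> bool" where
  "potential_schedule J p w \<sigma> \<longleftrightarrow>
     complete_schedule J \<sigma> \<and> (\<forall>r \<in> dominance_rule J p w. \<not> violates p \<sigma> r)"

end

theory Submission
  imports Defs
begin

text \<open>Clearing denominators, \<open>\<phi>\<^sub>i(t) - \<phi>\<^sub>j(t)\<close> is a positive multiple of
  \<open>(w\<^sub>i p\<^sub>j - w\<^sub>j p\<^sub>i)(t - t\<^sup>*\<^sub>i\<^sub>j)\<close>.  Since \<open>\<phi>\<^sub>i(0) > \<phi>\<^sub>j(0)\<close> and \<open>t\<^sup>*\<^sub>i\<^sub>j > 0\<close>, the leading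
  factor is negative, so \<open>\<phi>\<^sub>j\<close> overtakes \<open>\<phi>\<^sub>i\<close> after \<open>t\<^sup>*\<^sub>i\<^sub>j\<close> and the rule contains
  "\<open>i\<close> dominates \<open>j\<close> on \<open>[0, t\<^sup>*\<^sub>i\<^sub>j)\<close>" and "\<open>j\<close> dominates \<open>i\<close> on \<open>[t\<^sup>*\<^sub>i\<^sub>j, \<infinity>)\<close>".
  If \<open>i\<close> precedes \<open>j\<close>, then \<open>t\<^sub>i \<ge> t\<^sup>*\<^sub>i\<^sub>j\<close> and \<open>t\<^sub>j - p\<^sub>i \<ge> t\<^sub>i\<close> violate the second relation;
  if \<open>j\<close> precedes \<open>i\<close>, then \<open>0 \<le> t\<^sub>j \<le> t\<^sub>i - p\<^sub>j < t\<^sup>*\<^sub>i\<^sub>j\<close> violates the first.\<close>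

lemma takeWhile_neq_nth_distinct:
  "distinct xs \<Longrightarrow> a < length xs \<Longrightarrow> takeWhile (\<lambda>x. x \<noteq> xs ! a) xs = take a xs"
proof (induction xs arbitrary: a)
  case Nil
  then show ?case by simp
next
  case (Cons y ys)
  then show ?case
    by (cases a) auto
qed

lemma start_nth:
  "distinct xs \<Longrightarrow> a < length xs \<Longrightarrow> start p xs (xs ! a) = sum_list (map p (take a xs))"
  unfolding start_def by (simp add: takeWhile_neq_nth_distinct)

lemma start_nonneg:
  assumes "\<And>x. x \<in> set xs \<Longrightarrow> p x \<ge> (0::real)"
  shows "start p xs j \<ge> 0"
  unfolding start_def using assms
  by (intro sum_list_nonneg) (auto dest: set_takeWhileD)

lemma sum_list_map_take_mono:
  assumes "m \<le> n" "\<And>x. x \<in> set xs \<Longrightarrow> p x \<ge> (0::real)"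
  shows "sum_list (map p (take m xs)) \<le> sum_list (map p (take n xs))"
proof -
  have "take n xs = take m xs @ drop m (take n xs)"
    using assms(1) by (metis append_take_drop_id min.absorb1 take_take)
  moreover have "sum_list (map p (drop m (take n xs))) \<ge> 0"
    using assms(2) by (intro sum_list_nonneg) (auto dest: in_set_dropD in_set_takeD)
  ultimately show ?thesis
    by (metis add_le_cancel_left add.right_neutral map_append sum_list_append)
qed

lemma before_imp_start_add_le:
  assumes "distinct xs" "before xs a b" "\<And>x. x \<in> set xs \<Longrightarrow> p x \<ge> (0::real)"
  shows "start p xs a + p a \<le> start p xs b"
proof -
  obtain k l where kl: "k < l" "l < length xs" "xs ! k = a" "xs ! l = b"
    using assms(2) unfolding before_def by blast
  have "start p xs a + p a = sum_list (map p (take (Suc k) xs))"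
    using start_nth[OF assms(1), of k p] kl by (simp add: take_Suc_conv_app_nth)
  also have "\<dots> \<le> sum_list (map p (take l xs))"
    using kl assms(3) by (intro sum_list_map_take_mono) auto
  also have "\<dots> = start p xs b"
    using start_nth[OF assms(1), of l p] kl by simp
  finally show ?thesis .
qed

lemma before_or_before:
  assumes "a \<in> set xs" "b \<in> set xs" "a \<noteq> b"
  shows "before xs a b \<or> before xs b a"
proof -
  obtain k l where "k < length xs" "xs ! k = a" "l < length xs" "xs ! l = b"
    using assms(1,2) by (metis in_set_conv_nth)
  moreover have "k \<noteq> l" using calculation assms(3) by auto
  ultimately show ?thesis
    unfolding before_def by (metis linorder_neqE_nat)
qed

lemma phi_diff_eq:
  assumes "p i \<noteq> 0" "p j \<noteq> 0" "p i + t \<noteq> 0" "p j + t \<noteq> 0" "w i * p j \<noteq> w j * p i"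
  shows "phi p w i t - phi p w j t =
    (w i * p j - w j * p i) * (t - tstar p w i j) / (p i * (p i + t) * (p j * (p j + t)))"
proof -
  have "w i * p j - w j * p i \<noteq> 0"
    using assms(5) by simp
  then show ?thesis
    using assms(1-4) unfolding phi_def tstar_def
    by (simp add: divide_simps) (simp add: algebra_simps power2_eq_square)
qed

lemma phi_less_beyond_tstar:
  fixes p w :: "'a \<Rightarrow> real"
  assumes "p i > 0" "p j > 0" "w i * p j \<noteq> w j * p i"
    and "phi p w i 0 > phi p w j 0" "0 < tstar p w i j" "tstar p w i j < t"
  shows "phi p w i t < phi p w j t"
proof -
  define D where "D = w i * p j - w j * p i"
  define ts where "ts = tstar p w i j"
  have diff: "phi p w i s - phi p w j s = D * (s - ts) / (p i * (p i + s) * (p j * (p j + s)))"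
    if "s \<ge> 0" for s
    unfolding D_def ts_def using assms(1-3) that by (intro phi_diff_eq) auto
  have "0 < D * (0 - ts) / (p i * p i * (p j * p j))"
    using diff[of 0] assms(4) by simp
  moreover have "0 < p i * p i * (p j * p j)"
    using assms(1,2) by simp
  ultimately have "D * ts < 0"
    by (auto simp: divide_less_0_iff)
  then have "D < 0"
    using assms(5) ts_def by (simp add: mult_less_0_iff)
  then have "D * (t - ts) / (p i * (p i + t) * (p j * (p j + t))) < 0"
    using assms(1,2,5,6) ts_def by (intro divide_neg_pos mult_neg_pos) auto
  then show ?thesis
    using diff[of t] assms(5,6) ts_def by simp
qed

lemma crossing_relations_in_dominance_rule:
  fixes p w :: "'a \<Rightarrow> real"
  assumes "i \<in> J" "j \<in> J" "p i > 0" "p j > 0" "w i * p j \<noteq> w j * p i"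
    and "phi p w i 0 > phi p w j 0" "0 < tstar p w i j"
  shows "(i, j, {0..<tstar p w i j}) \<in> dominance_rule J p w"
    and "(j, i, {tstar p w i j..}) \<in> dominance_rule J p w"
proof -
  have "phi p w i (tstar p w i j + 1) < phi p w j (tstar p w i j + 1)"
    using assms(3-7) by (rule phi_less_beyond_tstar) simp
  moreover have "tstar p w i j + 1 \<ge> 0"
    using assms(7) by simp
  ultimately have not_i_over_j: "\<not> (\<forall>t\<ge>0. phi p w i t \<ge> phi p w j t)"
    using not_le by blast
  have not_j_over_i: "\<not> (\<forall>t\<ge>0. phi p w j t \<ge> phi p w i t)"
    using assms(6) not_le order_refl by blast
  have distinct_jobs: "i \<noteq> j" "(p i, w i) \<noteq> (p j, w j)" "(p j, w j) \<noteq> (p i, w i)"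
    using assms(5) by auto
  show "(i, j, {0..<tstar p w i j}) \<in> dominance_rule J p w"
    "(j, i, {tstar p w i j..}) \<in> dominance_rule J p w"
    unfolding dominance_rule_def mem_Collect_eq
    using assms(1,2,6) not_i_over_j not_j_over_i distinct_jobs by simp_all
qed

theorem lemma2:
  fixes J :: "'a set" and p w :: "'a \<Rightarrow> real" and i j :: 'a and \<sigma> :: "'a list"
  assumes "finite J"
    and "\<And>k. k \<in> J \<Longrightarrow> p k > 0 \<and> w k > 0"
    and "i \<in> J" and "j \<in> J"
    and "phi p w i 0 > phi p w j 0"
    and "w i * p j \<noteq> w j * p i"
    and "0 < tstar p w i j" and "tstar p w i j < (\<Sum>k\<in>J. p k)"
    and "complete_schedule J \<sigma>"
    and "tstar p w i j \<le> start p \<sigma> i" and "start p \<sigma> i < tstar p w i j + p j"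
  shows "\<not> potential_schedule J p w \<sigma>"
proof
  assume potential: "potential_schedule J p w \<sigma>"
  then have no_violation: "\<not> violates p \<sigma> r" if "r \<in> dominance_rule J p w" for r
    using that unfolding potential_schedule_def by blast
  have sched: "distinct \<sigma>" "set \<sigma> = J"
    using assms(9) unfolding complete_schedule_def by auto
  have nonneg: "\<And>x. x \<in> set \<sigma> \<Longrightarrow> p x \<ge> 0"
    using assms(2) sched(2) by (simp add: less_imp_le)
  have "p i > 0" "p j > 0"
    using assms(2-4) by auto
  note rules = crossing_relations_in_dominance_rule[OF assms(3,4) this assms(6,5,7)]
  have "i \<in> set \<sigma>" "j \<in> set \<sigma>" "i \<noteq> j"
    using assms(3,4,6) sched(2) by auto
  then consider "before \<sigma> i j" | "before \<sigma> j i"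
    by (metis before_or_before)
  then show False
  proof cases
    case 1
    have "start p \<sigma> i + p i \<le> start p \<sigma> j"
      using sched(1) 1 nonneg by (rule before_imp_start_add_le)
    with 1 assms(10) have "violates p \<sigma> (j, i, {tstar p w i j..})"
      unfolding violates_def by simp
    with no_violation rules(2) show False by blast
  next
    case 2
    have "start p \<sigma> j + p j \<le> start p \<sigma> i"
      using sched(1) 2 nonneg by (rule before_imp_start_add_le)
    moreover have "start p \<sigma> j \<ge> 0"
      using nonneg by (rule start_nonneg)
    ultimately have "violates p \<sigma> (i, j, {0..<tstar p w i j})"
      using 2 assms(11) unfolding violates_def by simp
    with no_violation rules(1) show False by blast
  qed
qed

end
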